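(* Let $\alpha\in(0,1)$, $a,b\in\mathbb{R}$, $\tau>0$, and $Q(s)=s^\alpha-a-b e^{-s\tau}$ (principal branch of $s^\alpha$). There is no $s\in\mathbb{C}\setminus\{0\}$ (in the domain of $Q$) with $Q(s)=Q'(s)=Q''(s)=Q'''(s)=0$.
   Context: $s^\alpha=|s|^\alpha e^{i\alpha\arg s}$ with $\arg s\in(-\pi,\pi)$; derivatives are complex derivatives in $s$. *)

theory Defs
  imports "HOL-Analysis.Analysis"
begin

text \<open>Q(s) = s^alpha - a - b e^(-s tau), with the principal branch s powr alpha
  (= exp(alpha * Ln s)); holomorphic on the slit plane UNIV - nonpos_Reals.\<close>
definition Qfun :: "real \<Rightarrow> real \<Rightarrow> real \<Rightarrow> real \<Rightarrow> complex \<Rightarrow> complex" where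
  "Qfun \<alpha> a b \<tau> s = s powr (complex_of_real \<alpha>) - complex_of_real a
     - complex_of_real b * exp (- s * complex_of_real \<tau>)"

end

theory Submission
  imports Defs
begin

text \<open>The \<open>n\<close>-th derivative of \<open>C z\<^sup>c + D e\<^sup>-\<^sup>z\<^sup>T\<close> is
  \<open>C c(c-1)\<dots>(c-n+1) z\<^sup>c\<^sup>-\<^sup>n + D (-T)\<^sup>n e\<^sup>-\<^sup>z\<^sup>T\<close>. So at a common zero \<open>s\<close> of \<open>Q', Q'', Q'''\<close>,
  with \<open>P = s\<^sup>\<alpha>\<close>, \<open>Y = -b e\<^sup>-\<^sup>s\<^sup>\<tau>\<close> and \<open>Z = \<tau> s\<close>, we get \<open>\<alpha> P = Z Y\<close>,
  \<open>\<alpha>(\<alpha>-1) P = -Z\<^sup>2 Y\<close> and \<open>\<alpha>(\<alpha>-1)(\<alpha>-2) P = Z\<^sup>3 Y\<close>. Dividing by the first,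
  \<open>Z = 1 - \<alpha>\<close> and \<open>(\<alpha>-1)(\<alpha>-2) = Z\<^sup>2 = (\<alpha>-1)\<^sup>2\<close>, impossible for \<open>\<alpha> \<noteq> 1\<close>.\<close>

lemma deriv_add_const:
  fixes f :: "'a::real_normed_field \<Rightarrow> 'a"
  shows "deriv (\<lambda>z. f z + c) = deriv f"
proof -
  have "(f has_field_derivative D) (at x) \<longleftrightarrow> ((\<lambda>z. f z + c) has_field_derivative D) (at x)"
    for x D
    using DERIV_add_const[of f D x c] DERIV_add_const[of "\<lambda>z. f z + c" D x "- c"]
    by (auto simp: add.commute)
  then show ?thesis
    by (intro ext) (simp add: deriv_def)
qed

lemma higher_deriv_add_const:
  fixes f :: "'a::real_normed_field \<Rightarrow> 'a"
  shows "(deriv ^^ Suc n) (\<lambda>z. f z + c) = (deriv ^^ Suc n) f"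
  by (simp only: funpow_Suc_right comp_def deriv_add_const)

lemma has_field_derivative_powr_exp:
  fixes C c D T z :: complex
  assumes "z \<notin> \<real>\<^sub>\<le>\<^sub>0"
  shows "((\<lambda>z. C * z powr c + D * exp (- z * T)) has_field_derivative
           C * c * z powr (c - 1) + D * (- T) * exp (- z * T)) (at z)"
  using assms by (auto intro!: derivative_eq_intros simp: algebra_simps)

lemma higher_deriv_powr_exp:
  fixes C c D T z :: complex
  assumes "z \<notin> \<real>\<^sub>\<le>\<^sub>0"
  shows "(deriv ^^ n) (\<lambda>z. C * z powr c + D * exp (- z * T)) z =
           C * (\<Prod>k<n. c - of_nat k) * z powr (c - of_nat n) + D * (- T) ^ n * exp (- z * T)"
  using assms
proof (induction n arbitrary: z)
  case 0
  then show ?case by simp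
next
  case (Suc n)
  define g where "g = (\<lambda>z. C * (\<Prod>k<n. c - of_nat k) * z powr (c - of_nat n)
                             + D * (- T) ^ n * exp (- z * T))"
  have "open (- \<real>\<^sub>\<le>\<^sub>0 :: complex set)"
    by (simp add: open_Compl)
  then have "\<forall>\<^sub>F w in nhds z. (deriv ^^ n) (\<lambda>z. C * z powr c + D * exp (- z * T)) w = g w"
    using Suc by (auto simp: g_def eventually_nhds)
  then have "(deriv ^^ Suc n) (\<lambda>z. C * z powr c + D * exp (- z * T)) z = deriv g z"
    by (simp only: funpow.simps comp_def) (rule deriv_cong_ev, simp_all)
  also have "\<dots> = C * (\<Prod>k<Suc n. c - of_nat k) * z powr (c - of_nat (Suc n))
                   + D * (- T) ^ Suc n * exp (- z * T)"
    unfolding g_def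
    by (rule DERIV_imp_deriv, rule has_field_derivative_powr_exp[OF Suc.prems, THEN DERIV_cong])
       (simp add: algebra_simps diff_diff_add)
  finally show ?case .
qed

lemma powr_diff_of_nat:
  fixes s c :: complex
  assumes "s \<noteq> 0"
  shows "s powr (c - of_nat n) = s powr c / s ^ n"
  using assms by (simp add: powr_diff powr_nat')

lemma no_common_zero_falling_factorials:
  fixes A P Y Z :: "'a::field"
  assumes "A \<noteq> 0" "A \<noteq> 1" "P \<noteq> 0"
    and eq1: "A * P - Z * Y = 0"
    and eq2: "A * (A - 1) * P + Z\<^sup>2 * Y = 0"
    and eq3: "A * (A - 1) * (A - 2) * P - Z ^ 3 * Y = 0"
  shows False
proof -
  have ZY: "Z * Y = A * P"
    using eq1 by simp
  have "A * P * (A - 1 + Z) = A * (A - 1) * P + Z * (A * P)"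
    by (simp add: algebra_simps)
  also have "\<dots> = 0"
    using ZY eq2 by (simp add: power2_eq_square mult.assoc)
  finally have "A - 1 + Z = 0"
    using assms(1,3) by simp
  then have Z: "Z = 1 - A"
    by (simp add: algebra_simps)
  have "A * P * ((A - 1) * (A - 2) - Z\<^sup>2) = A * (A - 1) * (A - 2) * P - Z\<^sup>2 * (A * P)"
    by (simp add: algebra_simps)
  also have "\<dots> = 0"
    using ZY eq3 by (simp add: power2_eq_square power3_eq_cube mult.assoc)
  finally have "(A - 1) * (A - 2) = Z\<^sup>2"
    using assms(1,3) by simp
  then have "(A - 1) * (A - 2) = (A - 1) * (A - 1)"
    using Z by (simp add: power2_eq_square algebra_simps)
  then have "A - 2 = A - 1"
    using assms(2) by simp
  then have "(1::'a) + 1 = 1"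
    by simp
  then show False
    by (metis add_cancel_right_right zero_neq_one)
qed

lemma higher_deriv_Qfun:
  assumes "s \<notin> \<real>\<^sub>\<le>\<^sub>0" "s \<noteq> 0" "n > 0"
  shows "s ^ n * (deriv ^^ n) (Qfun \<alpha> a b \<tau>) s =
           (\<Prod>k<n. of_real \<alpha> - of_nat k) * s powr of_real \<alpha>
           + (- (of_real \<tau> * s)) ^ n * (- of_real b * exp (- s * of_real \<tau>))"
proof -
  define G :: "complex \<Rightarrow> complex"
    where "G = (\<lambda>z. 1 * z powr of_real \<alpha> + (- of_real b) * exp (- z * of_real \<tau>))"
  obtain m where "n = Suc m"
    using \<open>n > 0\<close> gr0_implies_Suc by blast
  moreover have "Qfun \<alpha> a b \<tau> = (\<lambda>z. G z + - of_real a)"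
    by (simp add: Qfun_def G_def fun_eq_iff)
  ultimately have "(deriv ^^ n) (Qfun \<alpha> a b \<tau>) s = (deriv ^^ n) G s"
    by (simp only: higher_deriv_add_const)
  also have "\<dots> = 1 * (\<Prod>k<n. of_real \<alpha> - of_nat k) * (s powr of_real \<alpha> / s ^ n)
                   + (- of_real b) * (- of_real \<tau>) ^ n * exp (- s * of_real \<tau>)"
    unfolding G_def higher_deriv_powr_exp[OF \<open>s \<notin> \<real>\<^sub>\<le>\<^sub>0\<close>] powr_diff_of_nat[OF \<open>s \<noteq> 0\<close>] ..
  moreover have "(- (of_real \<tau> * s)) ^ n = (- of_real \<tau>) ^ n * s ^ n"
    by (simp add: power_mult_distrib[symmetric])
  ultimately show ?thesis
    using \<open>s \<noteq> 0\<close> by (simp add: field_simps)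
qed

theorem lemma3p1:
  fixes \<alpha> a b \<tau> :: real
  assumes "0 < \<alpha>" and "\<alpha> < 1" and "0 < \<tau>"
  shows "\<not> (\<exists>s. s \<noteq> 0 \<and> s \<notin> \<real>\<^sub>\<le>\<^sub>0 \<and>
            Qfun \<alpha> a b \<tau> s = 0 \<and>
            deriv (Qfun \<alpha> a b \<tau>) s = 0 \<and>
            (deriv ^^ 2) (Qfun \<alpha> a b \<tau>) s = 0 \<and>
            (deriv ^^ 3) (Qfun \<alpha> a b \<tau>) s = 0)"
proof
  assume "\<exists>s. s \<noteq> 0 \<and> s \<notin> \<real>\<^sub>\<le>\<^sub>0 \<and> Qfun \<alpha> a b \<tau> s = 0 \<and>
            deriv (Qfun \<alpha> a b \<tau>) s = 0 \<and> (deriv ^^ 2) (Qfun \<alpha> a b \<tau>) s = 0 \<and>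
            (deriv ^^ 3) (Qfun \<alpha> a b \<tau>) s = 0"
  then obtain s where s: "s \<noteq> 0" "s \<notin> \<real>\<^sub>\<le>\<^sub>0" "deriv (Qfun \<alpha> a b \<tau>) s = 0"
    "(deriv ^^ 2) (Qfun \<alpha> a b \<tau>) s = 0" "(deriv ^^ 3) (Qfun \<alpha> a b \<tau>) s = 0"
    by blast
  have zeros: "(deriv ^^ n) (Qfun \<alpha> a b \<tau>) s = 0" if "n \<in> {1, 2, 3}" for n
    using that s(3-5) by auto
  define P where "P = s powr of_real \<alpha>"
  define Y where "Y = - of_real b * exp (- s * of_real \<tau>)"
  define Z where "Z = of_real \<tau> * s"
  have eq: "(\<Prod>k<n. of_real \<alpha> - of_nat k) * P + (- Z) ^ n * Y = 0" if "n \<in> {1, 2, 3}" for n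
  proof -
    have "s ^ n * (deriv ^^ n) (Qfun \<alpha> a b \<tau>) s = 0"
      using zeros[OF that] by simp
    moreover have "n > 0"
      using that by auto
    ultimately show ?thesis
      using higher_deriv_Qfun[OF s(2,1), of n \<alpha> a b \<tau>] by (simp only: P_def Y_def Z_def)
  qed
  have "of_real \<alpha> * P - Z * Y = 0"
    using eq[of 1] by simp
  moreover have "of_real \<alpha> * (of_real \<alpha> - 1) * P + Z\<^sup>2 * Y = 0"
    using eq[of 2] by (simp add: numeral_2_eq_2)
  moreover have "of_real \<alpha> * (of_real \<alpha> - 1) * (of_real \<alpha> - 2) * P - Z ^ 3 * Y = 0"
    using eq[of 3] by (simp add: numeral_3_eq_3)
  moreover have "P \<noteq> 0"
    using \<open>s \<noteq> 0\<close> by (simp add: P_def)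
  ultimately show False
    using assms by (intro no_common_zero_falling_factorials) auto
qed

end
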